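(* In the adjusted bounding box center construction described in the context, let $i\in\{1,\dots,k\}$ be such that $B(P_i)$ is incomplete, and (in the coordinate system of $P_i$, after the normalizing reflection/rotation) suppose $q^{\star}_i\in\{(x,y)\in B(P_i): x\ge {q_i}_x \text{ or } y\ge {q_i}_y\}$. Then $\lVert q^{\star}_i-q_i\rVert_1\le \tfrac12\, l(B(P_i))$.
   Context: Setting: $P\subset\mathbb{R}^2$ finite, partitioned into nonempty $P_1,\dots,P_k$. A rectilinear Steiner tree for finite $S\subset\mathbb{R}^2$ is a tree embedded in the plane with horizontal/vertical segments as edges whose vertex set contains $S$; length = sum of $\ell_1$ edge lengths. A two-level rectilinear Steiner tree is $(T_{top},T_1,\dots,T_k)$ with $T_i$ a rectilinear Steiner tree for $P_i$ and $T_{top}$ a rectilinear Steiner tree intersecting every $T_i$; length $l(T_{top})+\sum_i l(T_i)$. $B(S)$ is the smallest axis-parallel rectangle containing $S$, $l(B(S))$ its width plus height. $\beta\in[0,1]$ is a parameter. Connection points: the coordinate system of $P_i$ has its origin at the center of $B(P_i)$. $B(P_i)$ is complete if $P_i$ has a point in each of the four quadrants of this coordinate system, otherwise incomplete. If incomplete, after a reflection/rotation of the plane (by a symmetry of the axis-parallel square), assume no point of $P_i$ lies in the lower-left quadrant and the width of $B(P_i)$ is at least its height; let $t_i^{\max}$ be half the height of $B(P_i)$, and in the coordinates of $P_i$ set $t_i^1=\max\{s\in[0,t_i^{\max}]: P_i\cap\{(x,y):x<s,y<s\}=\emptyset\}$, $t_i^2=\min\{s\in[0,t_i^{\max}]: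 P_i\cap\{(x,y):x>s,y>s\}=\emptyset\}$, $t_i=\min\{t_i^1,t_i^2,\beta t_i^{\max}\}$, and $q_i:=(t_i,t_i)$ in these coordinates. $T^{\star}=(T^{\star}_{top},T^{\star}_1,\dots,T^{\star}_k)$ is a minimum two-level rectilinear Steiner tree, chosen among all minimum ones with $T^{\star}_{top}$ as large as possible, so that for each $i$ there is a connection point $q^{\star}_i\in T^{\star}_{top}\cap T^{\star}_i\cap B(P_i)$. *)

theory Defs
  imports "HOL-Analysis.Analysis"
begin

type_synonym point = "real \<times> real"

definition l1 :: "point \<Rightarrow> point \<Rightarrow> real" where
  "l1 a b = \<bar>fst a - fst b\<bar> + \<bar>snd a - snd b\<bar>"

definition xmin :: "point set \<Rightarrow> real" where "xmin S = Min (fst ` S)"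
definition xmax :: "point set \<Rightarrow> real" where "xmax S = Max (fst ` S)"
definition ymin :: "point set \<Rightarrow> real" where "ymin S = Min (snd ` S)"
definition ymax :: "point set \<Rightarrow> real" where "ymax S = Max (snd ` S)"

definition bbox :: "point set \<Rightarrow> point set" where
  "bbox S = {p. xmin S \<le> fst p \<and> fst p \<le> xmax S \<and> ymin S \<le> snd p \<and> snd p \<le> ymax S}"

definition bwidth :: "point set \<Rightarrow> real" where "bwidth S = xmax S - xmin S"
definition bheight :: "point set \<Rightarrow> real" where "bheight S = ymax S - ymin S"

definition lbox :: "point set \<Rightarrow> real" where "lbox S = bwidth S + bheight S"

definition bcenter :: "point set \<Rightarrow> point" where
  "bcenter S = ((xmin S + xmax S) / 2, (ymin S + ymax S) / 2)"

definition local_coords :: "point set \<Rightarrow> point \<Rightarrow> point" where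
  "local_coords S p = p - bcenter S"

text \<open>Complete: a point in each of the four (open) quadrants of the coordinate system of S.\<close>
definition complete_box :: "point set \<Rightarrow> bool" where
  "complete_box S \<longleftrightarrow>
     (\<forall>a\<in>{1,-1::real}. \<forall>b\<in>{1,-1::real}.
        \<exists>p\<in>S. a * fst (local_coords S p) > 0 \<and> b * snd (local_coords S p) > 0)"

text \<open>The 8 symmetries of the axis-parallel square (about the origin).\<close>
definition square_syms :: "(point \<Rightarrow> point) set" where
  "square_syms =
     {(\<lambda>(x, y). (a * x, b * y)) | a b. a \<in> {1, -1::real} \<and> b \<in> {1, -1::real}} \<union>
     {(\<lambda>(x, y). (a * y, b * x)) | a b. a \<in> {1, -1::real} \<and> b \<in> {1, -1::real}}"

definition normalized_set :: "(point \<Rightarrow> point) \<Rightarrow> point set \<Rightarrow> point set" where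
  "normalized_set g S = (\<lambda>p. g (local_coords S p)) ` S"

definition normalizing :: "(point \<Rightarrow> point) \<Rightarrow> point set \<Rightarrow> bool" where
  "normalizing g S \<longleftrightarrow> g \<in> square_syms \<and>
     (\<forall>p\<in>normalized_set g S. \<not> (fst p < 0 \<and> snd p < 0)) \<and>
     bwidth (normalized_set g S) \<ge> bheight (normalized_set g S)"

definition t_max :: "(point \<Rightarrow> point) \<Rightarrow> point set \<Rightarrow> real" where
  "t_max g S = bheight (normalized_set g S) / 2"

definition t_one :: "(point \<Rightarrow> point) \<Rightarrow> point set \<Rightarrow> real" where
  "t_one g S = Sup {s. 0 \<le> s \<and> s \<le> t_max g S \<and>
       (\<forall>p\<in>normalized_set g S. \<not> (fst p < s \<and> snd p < s))}"

definition t_two :: "(point \<Rightarrow> point) \<Rightarrow> point set \<Rightarrow> real" where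
  "t_two g S = Inf {s. 0 \<le> s \<and> s \<le> t_max g S \<and>
       (\<forall>p\<in>normalized_set g S. \<not> (fst p > s \<and> snd p > s))}"

definition t_conn :: "real \<Rightarrow> (point \<Rightarrow> point) \<Rightarrow> point set \<Rightarrow> real" where
  "t_conn \<beta> g S = min (min (t_one g S) (t_two g S)) (\<beta> * t_max g S)"

text \<open>q_i = (t_i, t_i) in the (normalised) coordinates of S, expressed in the original plane.\<close>
definition conn_point :: "real \<Rightarrow> (point \<Rightarrow> point) \<Rightarrow> point set \<Rightarrow> point" where
  "conn_point \<beta> g S = bcenter S + inv g (t_conn \<beta> g S, t_conn \<beta> g S)"

text \<open>An embedded tree given by its vertex set V and its (oriented) edge set E;
  each edge is the straight segment between its endpoints.\<close>
type_synonym rtree = "point set \<times> (point \<times> point) set"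

definition adj :: "rtree \<Rightarrow> (point \<times> point) set" where
  "adj T = snd T \<union> (snd T)\<inverse>"

definition is_rtree :: "rtree \<Rightarrow> bool" where
  "is_rtree T \<longleftrightarrow> (let V = fst T; E = snd T in
     finite V \<and> V \<noteq> {} \<and> E \<subseteq> V \<times> V \<and>
     (\<forall>(a, b)\<in>E. a \<noteq> b \<and> (fst a = fst b \<or> snd a = snd b)) \<and>
     (\<forall>(a, b)\<in>E. \<forall>v\<in>V. v \<in> closed_segment a b \<longrightarrow> v = a \<or> v = b) \<and>
     (\<forall>(a, b)\<in>E. \<forall>(c, d)\<in>E. (a, b) \<noteq> (c, d) \<longrightarrow>
        closed_segment a b \<inter> closed_segment c d \<subseteq> {a, b} \<inter> {c, d}) \<and>
     (\<forall>u\<in>V. \<forall>v\<in>V. (u, v) \<in> (adj T)\<^sup>*) \<and>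
     card E + 1 = card V)"

definition is_rst :: "point set \<Rightarrow> rtree \<Rightarrow> bool" where
  "is_rst S T \<longleftrightarrow> is_rtree T \<and> S \<subseteq> fst T"

definition tree_points :: "rtree \<Rightarrow> point set" where
  "tree_points T = fst T \<union> (\<Union>(a, b)\<in>snd T. closed_segment a b)"

definition tree_length :: "rtree \<Rightarrow> real" where
  "tree_length T = (\<Sum>(a, b)\<in>snd T. l1 a b)"

definition is_two_level :: "nat \<Rightarrow> (nat \<Rightarrow> point set) \<Rightarrow> rtree \<Rightarrow> (nat \<Rightarrow> rtree) \<Rightarrow> bool" where
  "is_two_level k P Ttop T \<longleftrightarrow> is_rst {} Ttop \<and>
     (\<forall>i\<in>{1..k}. is_rst (P i) (T i) \<and> tree_points Ttop \<inter> tree_points (T i) \<noteq> {})"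

definition two_level_length :: "nat \<Rightarrow> rtree \<Rightarrow> (nat \<Rightarrow> rtree) \<Rightarrow> real" where
  "two_level_length k Ttop T = tree_length Ttop + (\<Sum>i\<in>{1..k}. tree_length (T i))"

definition min_two_level :: "nat \<Rightarrow> (nat \<Rightarrow> point set) \<Rightarrow> rtree \<Rightarrow> (nat \<Rightarrow> rtree) \<Rightarrow> bool" where
  "min_two_level k P Ttop T \<longleftrightarrow> is_two_level k P Ttop T \<and>
     (\<forall>Ttop' T'. is_two_level k P Ttop' T' \<longrightarrow>
        two_level_length k Ttop T \<le> two_level_length k Ttop' T')"

definition opt_two_level :: "nat \<Rightarrow> (nat \<Rightarrow> point set) \<Rightarrow> rtree \<Rightarrow> (nat \<Rightarrow> rtree) \<Rightarrow> bool" where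
  "opt_two_level k P Ttop T \<longleftrightarrow> min_two_level k P Ttop T \<and>
     (\<forall>Ttop' T'. min_two_level k P Ttop' T' \<longrightarrow> tree_length Ttop' \<le> tree_length Ttop)"

end

theory Submission imports Defs begin

text \<open>Write \<open>t = t_i\<close> and let \<open>(x, y)\<close> be the normalised coordinates of \<open>q\<^sup>\<star>\<^sub>i\<close>.
  Since the normalising map is an \<open>\<ell>\<^sub>1\<close>-isometry, the distance to be bounded is
  \<open>|x - t| + |y - t|\<close>, where \<open>|x|\<close> and \<open>|y|\<close> are bounded by the two half side lengths of
  \<open>B(P\<^sub>i)\<close> (in some order) because \<open>q\<^sup>\<star>\<^sub>i \<in> B(P\<^sub>i)\<close>. If, say, \<open>x \<ge> t\<close>, then
  \<open>|x - t| \<le> |x| - t\<close> and \<open>|y - t| \<le> |y| + t\<close>, so the two occurrences of \<open>t\<close> cancel;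
  all that is needed about \<open>t\<close> is \<open>t \<ge> 0\<close>, and of \<open>T\<^sup>\<star>\<close> only that
  \<open>q\<^sup>\<star>\<^sub>i \<in> B(P\<^sub>i)\<close>.
  Nonnegativity of \<open>t\<^sup>2\<^sub>i\<close> uses that the normalised box is centred, so
  \<open>t\<^sup>max\<^sub>i\<close> bounds every normalised \<open>y\<close>-coordinate and lies in the set whose
  infimum defines \<open>t\<^sup>2\<^sub>i\<close>.\<close>

lemma l1_diagonal_le:
  fixes a b t :: real
  assumes "\<bar>fst p\<bar> \<le> a" "\<bar>snd p\<bar> \<le> b" "0 \<le> t" "t \<le> fst p \<or> t \<le> snd p"
  shows "l1 p (t, t) \<le> a + b"
  using assms unfolding l1_def by auto

lemma bbox_local_coords_abs_le:
  assumes "p \<in> bbox S"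
  shows "\<bar>fst (local_coords S p)\<bar> \<le> bwidth S / 2" "\<bar>snd (local_coords S p)\<bar> \<le> bheight S / 2"
  using assms unfolding bbox_def local_coords_def bcenter_def bwidth_def bheight_def abs_le_iff
  by (simp_all add: field_simps)

lemma square_symsE:
  assumes "g \<in> square_syms"
  obtains a b where "a \<in> {1, -1::real}" "b \<in> {1, -1::real}" "g = (\<lambda>(x, y). (a * x, b * y))"
  | a b where "a \<in> {1, -1::real}" "b \<in> {1, -1::real}" "g = (\<lambda>(x, y). (a * y, b * x))"
  using assms unfolding square_syms_def by blast

lemma square_sym_l1:
  assumes "g \<in> square_syms"
  shows "l1 (g u) (g v) = l1 u v"
proof -
  have sign: "\<bar>c * r - c * s\<bar> = \<bar>r - s\<bar>" if "c \<in> {1, -1::real}" for c r s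
    using that by auto
  from assms show ?thesis
    by (cases rule: square_symsE) (auto simp: l1_def sign split: prod.splits)
qed

lemma square_sym_surj:
  assumes "g \<in> square_syms"
  shows "surj g"
proof -
  have "\<exists>v. g v = w" for w
    using assms
  proof (cases rule: square_symsE)
    case (1 a b)
    then show ?thesis by (intro exI[of _ "(a * fst w, b * snd w)"]) auto
  next
    case (2 a b)
    then show ?thesis by (intro exI[of _ "(b * snd w, a * fst w)"]) auto
  qed
  then show ?thesis by (metis surjI)
qed

lemma square_sym_abs_coords:
  assumes "g \<in> square_syms"
  shows "(\<bar>fst (g u)\<bar> = \<bar>fst u\<bar> \<and> \<bar>snd (g u)\<bar> = \<bar>snd u\<bar>) \<or>
         (\<bar>fst (g u)\<bar> = \<bar>snd u\<bar> \<and> \<bar>snd (g u)\<bar> = \<bar>fst u\<bar>)"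
  using assms by (cases rule: square_symsE) (auto simp: abs_mult split: prod.splits)

lemma l1_conn_point:
  assumes "g \<in> square_syms"
  shows "l1 q (conn_point \<beta> g S) =
    l1 (g (local_coords S q)) (t_conn \<beta> g S, t_conn \<beta> g S)"
proof -
  define w where "w = (t_conn \<beta> g S, t_conn \<beta> g S)"
  have "l1 q (conn_point \<beta> g S) = l1 (local_coords S q) (inv g w)"
    by (simp add: conn_point_def local_coords_def l1_def w_def algebra_simps)
  also have "\<dots> = l1 (g (local_coords S q)) (g (inv g w))"
    using square_sym_l1[OF assms] by simp
  also have "g (inv g w) = w"
    using square_sym_surj[OF assms] by (simp add: surj_f_inv_f)
  finally show ?thesis unfolding w_def .
qed

lemma Max_Min_sign_affine:
  fixes A :: "real set"
  assumes "finite A" "A \<noteq> {}" "b \<in> {1, -1}"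
  shows "Max ((\<lambda>v. b * v + c) ` A) + Min ((\<lambda>v. b * v + c) ` A) = b * (Max A + Min A) + 2 * c"
proof (cases "b = 1")
  case True
  then show ?thesis
    using Max_add_commute[OF assms(1,2), of id c] Min_add_commute[OF assms(1,2), of id c] by simp
next
  case False
  with assms(3) have "b = -1" by simp
  moreover have "Max ((\<lambda>v. - v + c) ` A) = - Min A + c" "Min ((\<lambda>v. - v + c) ` A) = - Max A + c"
    using Max_add_commute[OF assms(1,2), of uminus c] Min_add_commute[OF assms(1,2), of uminus c]
      assms(1,2) by simp_all
  ultimately show ?thesis by simp
qed

lemma normalized_set_ymax_ymin:
  assumes S: "finite S" "S \<noteq> {}" and g: "g \<in> square_syms"
  shows "ymax (normalized_set g S) + ymin (normalized_set g S) = 0"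
proof -
  obtain f :: "point \<Rightarrow> real" and b where b: "b \<in> {1, -1}" and
    f: "\<And>p. snd (g (local_coords S p)) = b * f p + - b * ((Min (f ` S) + Max (f ` S)) / 2)"
    using g
  proof (cases rule: square_symsE)
    case (1 a b)
    then show ?thesis
      by (intro that[of b snd])
        (auto simp: local_coords_def bcenter_def ymin_def ymax_def field_simps split: prod.splits)
  next
    case (2 a b)
    then show ?thesis
      by (intro that[of b fst])
        (auto simp: local_coords_def bcenter_def xmin_def xmax_def field_simps split: prod.splits)
  qed
  define c where "c = - b * ((Min (f ` S) + Max (f ` S)) / 2)"
  have "snd ` normalized_set g S = (\<lambda>v. b * v + c) ` f ` S"
    unfolding normalized_set_def c_def by (auto simp: image_image f)
  then have "ymax (normalized_set g S) + ymin (normalized_set g S) =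
      b * (Max (f ` S) + Min (f ` S)) + 2 * c"
    unfolding ymax_def ymin_def using Max_Min_sign_affine S b by simp
  then show ?thesis by (simp add: c_def)
qed

lemma normalized_set_snd_le_t_max:
  assumes "finite S" "S \<noteq> {}" "g \<in> square_syms" "p \<in> normalized_set g S"
  shows "snd p \<le> t_max g S"
proof -
  have "finite (snd ` normalized_set g S)"
    using assms(1) by (simp add: normalized_set_def)
  then have "snd p \<le> ymax (normalized_set g S)"
    using assms(4) by (simp add: ymax_def)
  then show ?thesis
    using normalized_set_ymax_ymin[OF assms(1-3)] by (simp add: t_max_def bheight_def)
qed

lemma t_max_nonneg:
  assumes "finite S" "S \<noteq> {}" "g \<in> square_syms"
  shows "0 \<le> t_max g S"
proof -
  let ?Y = "snd ` normalized_set g S"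
  have "finite ?Y" "?Y \<noteq> {}"
    using assms(1,2) by (auto simp: normalized_set_def)
  then have "ymin (normalized_set g S) \<le> ymax (normalized_set g S)"
    unfolding ymin_def ymax_def by (meson Max_ge Min_in order_trans Min_le Max_in)
  then show ?thesis by (simp add: t_max_def bheight_def)
qed

lemma t_one_nonneg:
  assumes "finite S" "S \<noteq> {}" "normalizing g S"
  shows "0 \<le> t_one g S"
  unfolding t_one_def
proof (rule cSup_upper)
  show "0 \<in> {s. 0 \<le> s \<and> s \<le> t_max g S \<and> (\<forall>p\<in>normalized_set g S. \<not> (fst p < s \<and> snd p < s))}"
    using assms t_max_nonneg by (auto simp: normalizing_def)
qed (auto intro: bdd_aboveI[of _ "t_max g S"])

lemma t_two_nonneg:
  assumes "finite S" "S \<noteq> {}" "normalizing g S"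
  shows "0 \<le> t_two g S"
  unfolding t_two_def
proof (rule cInf_greatest)
  have "g \<in> square_syms" using assms(3) by (simp add: normalizing_def)
  then show "{s. 0 \<le> s \<and> s \<le> t_max g S \<and> (\<forall>p\<in>normalized_set g S. \<not> (s < fst p \<and> s < snd p))} \<noteq> {}"
    using assms(1,2) t_max_nonneg normalized_set_snd_le_t_max
    by (intro ex_in_conv[THEN iffD1] exI[of _ "t_max g S"]) force
qed simp

lemma t_conn_nonneg:
  assumes "finite S" "S \<noteq> {}" "normalizing g S" "0 \<le> \<beta>"
  shows "0 \<le> t_conn \<beta> g S"
  using assms t_one_nonneg t_two_nonneg t_max_nonneg
  by (simp add: t_conn_def normalizing_def)

theorem lemma7:
  fixes k :: nat and P :: "nat \<Rightarrow> point set" and \<beta> :: real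
    and Ttop :: rtree and T :: "nat \<Rightarrow> rtree" and qstar :: point
    and g :: "point \<Rightarrow> point" and i :: nat
  assumes fin: "\<And>j. j \<in> {1..k} \<Longrightarrow> finite (P j) \<and> P j \<noteq> {}"
    and disj: "\<And>j j'. j \<in> {1..k} \<Longrightarrow> j' \<in> {1..k} \<Longrightarrow> j \<noteq> j' \<Longrightarrow> P j \<inter> P j' = {}"
    and beta: "0 \<le> \<beta>" "\<beta> \<le> 1"
    and opt: "opt_two_level k P Ttop T"
    and i: "i \<in> {1..k}"
    and qstar: "qstar \<in> tree_points Ttop \<inter> tree_points (T i) \<inter> bbox (P i)"
    and incomplete: "\<not> complete_box (P i)"
    and g: "normalizing g (P i)"
    and region: "fst (g (local_coords (P i) qstar)) \<ge> t_conn \<beta> g (P i) \<or>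
                 snd (g (local_coords (P i) qstar)) \<ge> t_conn \<beta> g (P i)"
  shows "l1 qstar (conn_point \<beta> g (P i)) \<le> lbox (P i) / 2"
proof -
  define u where "u = local_coords (P i) qstar"
  define t where "t = t_conn \<beta> g (P i)"
  have sym: "g \<in> square_syms" using g by (simp add: normalizing_def)
  have t: "0 \<le> t" unfolding t_def using t_conn_nonneg fin[OF i] g beta(1) by blast
  have reg: "t \<le> fst (g u) \<or> t \<le> snd (g u)"
    using region unfolding u_def t_def .
  have "\<bar>fst u\<bar> \<le> bwidth (P i) / 2" "\<bar>snd u\<bar> \<le> bheight (P i) / 2"
    using bbox_local_coords_abs_le qstar unfolding u_def by auto
  then consider
      "\<bar>fst (g u)\<bar> \<le> bwidth (P i) / 2" "\<bar>snd (g u)\<bar> \<le> bheight (P i) / 2"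
    | "\<bar>fst (g u)\<bar> \<le> bheight (P i) / 2" "\<bar>snd (g u)\<bar> \<le> bwidth (P i) / 2"
    using square_sym_abs_coords[OF sym, of u] by fastforce
  then have "l1 (g u) (t, t) \<le> bwidth (P i) / 2 + bheight (P i) / 2"
  proof cases
    case 1
    then show ?thesis by (rule l1_diagonal_le[OF _ _ t reg])
  next
    case 2
    then show ?thesis by (subst add.commute) (rule l1_diagonal_le[OF _ _ t reg])
  qed
  then show ?thesis
    using l1_conn_point[OF sym] by (simp add: u_def t_def lbox_def)
qed

end
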